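(* Let $F_0$ and $F_s$ be distribution functions, $U_r(t):=F_r^{\leftarrow}(1-1/t)=\bigl(1/(1-F_r)\bigr)^{\leftarrow}(t)$ for $t>1$, $r\in\{0,s\}$, and let $c\in\mathbb{R}$, $s\ge0$. Suppose $F_0$ is in the max-domain of attraction of $G_\gamma(x)=\exp\{-(1+\gamma x)^{-1/\gamma}\}$ for some $\gamma\in\mathbb{R}$, with a positive function $a_0$ such that $\lim_{t\to\infty}\frac{U_0(tx)-U_0(t)}{a_0(t)}=\frac{x^\gamma-1}{\gamma}$ for all $x>0$. Let $x^*:=\sup\{x:F_0(x)<1\}$. Then $$\lim_{x\uparrow x^*}\frac{1-F_s(x)}{1-F_0(x)}=e^{cs}\quad\Longleftrightarrow\quad\lim_{t\to\infty}\frac{U_s(t)-U_0(t)}{a_0(t)}=\frac{e^{c\gamma s}-1}{\gamma}.$$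
   Context: $F^{\leftarrow}$ denotes the generalized (left-continuous) inverse. For $\gamma=0$, $\frac{x^\gamma-1}{\gamma}$ means $\log x$, $(1+\gamma x)^{-1/\gamma}$ means $e^{-x}$, and $\frac{e^{c\gamma s}-1}{\gamma}$ means $cs$. *)

theory Defs
  imports "HOL-Analysis.Analysis"
begin

definition distribution_function :: "(real \<Rightarrow> real) \<Rightarrow> bool" where
  "distribution_function F \<longleftrightarrow>
     mono F \<and> (\<forall>x. continuous (at_right x) F) \<and>
     (F \<longlongrightarrow> 0) at_bot \<and> (F \<longlongrightarrow> 1) at_top"

definition gen_inv :: "(real \<Rightarrow> real) \<Rightarrow> real \<Rightarrow> real" where
  "gen_inv F p = Inf {x. p \<le> F x}"

definition tail_quantile :: "(real \<Rightarrow> real) \<Rightarrow> real \<Rightarrow> real" where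
  "tail_quantile F t = gen_inv F (1 - 1 / t)"

definition right_endpoint :: "(real \<Rightarrow> real) \<Rightarrow> ereal" where
  "right_endpoint F = Sup {ereal x | x. F x < 1}"

definition to_right_endpoint :: "(real \<Rightarrow> real) \<Rightarrow> real filter" where
  "to_right_endpoint F =
     (if right_endpoint F = \<infinity> then at_top else at_left (real_of_ereal (right_endpoint F)))"

definition gpd_h :: "real \<Rightarrow> real \<Rightarrow> real" where
  "gpd_h \<gamma> x = (if \<gamma> = 0 then ln x else (x powr \<gamma> - 1) / \<gamma>)"

definition shift_const :: "real \<Rightarrow> real \<Rightarrow> real \<Rightarrow> real" where
  "shift_const \<gamma> c s = (if \<gamma> = 0 then c * s else (exp (c * \<gamma> * s) - 1) / \<gamma>)"

end

theory Submission
  imports Defs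
begin

text \<open>
  By the Galois relation \<open>U t \<le> x \<longleftrightarrow> 1 - 1/t \<le> F x\<close>, a bound
  \<open>m < (1 - F\<^sub>s x) / (1 - F\<^sub>0 x)\<close> for \<open>x\<close> near \<open>x\<^sup>*\<close> amounts to
  \<open>U\<^sub>0 (t m) \<le> U\<^sub>s t\<close> for large \<open>t\<close>, and similarly for upper bounds. Hence the tail ratio
  tends to \<open>\<lambda> = e\<^sup>c\<^sup>s\<close> iff \<open>U\<^sub>s t\<close> lies eventually between \<open>U\<^sub>0 (t m)\<close> and
  \<open>U\<^sub>0 (t m')\<close> for all \<open>m < \<lambda> < m'\<close>. As \<open>h(x) = (x\<^sup>\<gamma> - 1)/\<gamma>\<close> is continuous and
  strictly increasing, the same bracketing is equivalent to \<open>(U\<^sub>s t - U\<^sub>0 t) / a\<^sub>0 t \<rightarrow> h(\<lambda>)\<close>,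
  and \<open>h(e\<^sup>c\<^sup>s) = (e\<^sup>c\<^sup>\<gamma>\<^sup>s - 1)/\<gamma>\<close>. Beyond this, the domain of attraction condition only
  shows that \<open>U\<^sub>0\<close> keeps increasing, i.e. that \<open>F\<^sub>0\<close> has no atom at its right endpoint.
\<close>

lemma filterlim_mult_const_at_top: "(m::real) > 0 \<Longrightarrow> filterlim (\<lambda>t. t * m) at_top at_top"
  by (rule filterlim_at_top_mult_tendsto_pos[OF tendsto_const _ filterlim_ident])

lemma gen_inv_le_iff:
  assumes df: "distribution_function F" and p: "0 < p" "p < 1"
  shows "gen_inv F p \<le> x \<longleftrightarrow> p \<le> F x"
proof -
  have m: "mono F" and rc: "\<And>x. continuous (at_right x) F"
    and l0: "(F \<longlongrightarrow> 0) at_bot" and l1: "(F \<longlongrightarrow> 1) at_top"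
    using df by (auto simp: distribution_function_def)
  define S where "S = {x. p \<le> F x}"
  obtain b where b: "\<And>x. x \<le> b \<Longrightarrow> F x < p"
    using order_tendstoD(2)[OF l0 p(1)] by (auto simp: eventually_at_bot_linorder)
  have bdd: "bdd_below S"
    unfolding bdd_below_def S_def using b by (metis mem_Collect_eq not_le order.order_iff_strict)
  obtain c where "\<And>x. x \<ge> c \<Longrightarrow> p < F x"
    using order_tendstoD(1)[OF l1 p(2)] by (auto simp: eventually_at_top_linorder)
  then have ne: "S \<noteq> {}" unfolding S_def by (metis empty_iff less_imp_le mem_Collect_eq order_refl)
  have "eventually (\<lambda>y. p \<le> F y) (at_right (Inf S))"
    unfolding eventually_at_right_field
  proof (intro exI[of _ "Inf S + 1"] conjI allI impI)
    fix y assume "Inf S < y"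
    then obtain s where "s \<in> S" "s < y" using cInf_less_iff[OF ne bdd] by auto
    then show "p \<le> F y" using m by (auto simp: S_def mono_def intro: order_trans)
  qed simp
  then have FInf: "p \<le> F (Inf S)"
    using rc[of "Inf S"] by (auto simp: continuous_within intro: tendsto_lowerbound)
  show ?thesis
  proof
    assume "gen_inv F p \<le> x"
    then show "p \<le> F x" using FInf m by (auto simp: gen_inv_def S_def mono_def intro: order_trans)
  next
    assume "p \<le> F x"
    then show "gen_inv F p \<le> x" using cInf_lower[OF _ bdd] by (simp add: gen_inv_def S_def)
  qed
qed

lemma tail_quantile_le_iff:
  assumes "distribution_function F" "t > 1"
  shows "tail_quantile F t \<le> x \<longleftrightarrow> 1 - 1/t \<le> F x"
  unfolding tail_quantile_def using assms by (intro gen_inv_le_iff) auto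

lemma tail_quantile_mono:
  assumes df: "distribution_function F" and "1 < t" "t \<le> r"
  shows "tail_quantile F t \<le> tail_quantile F r"
proof -
  have "1 - 1/t \<le> 1 - 1/r" using assms by (simp add: frac_le)
  also have "\<dots> \<le> F (tail_quantile F r)"
    using tail_quantile_le_iff[OF df, of r "tail_quantile F r"] assms by simp
  finally show ?thesis using tail_quantile_le_iff[OF df \<open>1 < t\<close>] by simp
qed

lemma eventually_gt_tail_quantile:
  assumes df: "distribution_function F" and "F y < 1"
  shows "eventually (\<lambda>t. y < tail_quantile F t) at_top"
  using eventually_gt_at_top[of "max 1 (1 / (1 - F y))"]
proof eventually_elim
  case (elim t)
  then have "1/t < 1 - F y" using assms(2) by (auto simp: field_simps)
  then show ?case using tail_quantile_le_iff[OF df, of t y] elim by (auto simp: not_le)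
qed

lemma le_right_endpoint: "F y < 1 \<Longrightarrow> ereal y \<le> right_endpoint F"
  unfolding right_endpoint_def by (rule Sup_upper) auto

lemma less_1_of_less_right_endpoint:
  assumes "distribution_function F" "ereal y < right_endpoint F" shows "F y < 1"
proof -
  obtain w where "F w < 1" "y < w"
    using assms(2) unfolding right_endpoint_def less_Sup_iff by auto
  moreover have "mono F" using assms(1) by (simp add: distribution_function_def)
  ultimately show ?thesis by (meson less_imp_le monoD order_le_less_trans)
qed

lemma right_endpoint_neq_MInf:
  assumes "distribution_function F" shows "right_endpoint F \<noteq> -\<infinity>"
proof -
  have "(F \<longlongrightarrow> 0) at_bot" using assms by (simp add: distribution_function_def)
  then obtain x where "F x < 1"
    using order_tendstoD(2)[of F 0 at_bot 1] by (auto simp: eventually_at_bot_linorder)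
  then show ?thesis using le_right_endpoint[of F x] by auto
qed

lemma tail_quantile_le_right_endpoint:
  assumes df: "distribution_function F" and "t > 1"
  shows "ereal (tail_quantile F t) \<le> right_endpoint F"
proof (cases "right_endpoint F")
  case (real r)
  have "tail_quantile F t \<le> w" if "r < w" for w
  proof -
    have "\<not> F w < 1" using le_right_endpoint[of F w] real that by auto
    moreover have "1 - 1/t \<le> 1" using \<open>t > 1\<close> by simp
    ultimately have "1 - 1/t \<le> F w" by linarith
    then show ?thesis using tail_quantile_le_iff[OF df \<open>t > 1\<close>] by simp
  qed
  then show ?thesis using real by (simp add: dense_ge)
qed (use right_endpoint_neq_MInf[OF df] in auto)

lemma tail_quantile_less_right_endpointI:
  assumes df: "distribution_function F"
    and incr: "eventually (\<lambda>t. tail_quantile F t < tail_quantile F (t * x)) at_top" and "x > 1"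
  shows "\<forall>t>1. ereal (tail_quantile F t) < right_endpoint F"
proof (intro allI impI)
  fix t :: real assume "t > 1"
  obtain r where "t \<le> r" "tail_quantile F r < tail_quantile F (r * x)"
    using incr unfolding eventually_at_top_linorder by (metis max.cobounded1 max.cobounded2)
  then have "ereal (tail_quantile F t) < ereal (tail_quantile F (r * x))"
    using tail_quantile_mono[OF df \<open>t > 1\<close> \<open>t \<le> r\<close>] by simp
  also have "\<dots> \<le> right_endpoint F"
    using \<open>t > 1\<close> \<open>t \<le> r\<close> \<open>x > 1\<close> by (intro tail_quantile_le_right_endpoint[OF df] less_1_mult) auto
  finally show "ereal (tail_quantile F t) < right_endpoint F" .
qed

lemma eventually_to_right_endpoint:
  assumes "distribution_function F"
  shows "eventually P (to_right_endpoint F) \<longleftrightarrow>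
    (\<exists>y0. ereal y0 < right_endpoint F \<and> (\<forall>y. y0 < y \<and> ereal y < right_endpoint F \<longrightarrow> P y))"
proof (cases "right_endpoint F")
  case (real r)
  then show ?thesis by (simp add: to_right_endpoint_def eventually_at_left_field) blast
next
  case PInf
  then show ?thesis by (simp add: to_right_endpoint_def eventually_at_top_dense)
qed (use right_endpoint_neq_MInf[OF assms] in simp)

lemma eventually_tail_small_to_right_endpoint:
  assumes df: "distribution_function F"
    and no_atom: "\<forall>t>1. ereal (tail_quantile F t) < right_endpoint F" and "e > 0"
  shows "eventually (\<lambda>y. 0 < 1 - F y \<and> 1 - F y < e) (to_right_endpoint F)"
  unfolding eventually_to_right_endpoint[OF df]
proof (intro exI conjI allI impI)
  define t where "t = max 2 (2/e)"
  have "t > 1" by (simp add: t_def)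
  then show "ereal (tail_quantile F t) < right_endpoint F" using no_atom by simp
  fix y assume y: "tail_quantile F t < y \<and> ereal y < right_endpoint F"
  show "0 < 1 - F y" using less_1_of_less_right_endpoint[OF df] y by simp
  have "1/t < e"
    using \<open>e > 0\<close> by (auto simp: t_def field_simps max_def)
  moreover have "1 - 1/t \<le> F y" using tail_quantile_le_iff[OF df \<open>t > 1\<close>, of y] y by simp
  ultimately show "1 - F y < e" by simp
qed

lemma filterlim_inverse_tail_to_right_endpoint:
  assumes df: "distribution_function F"
    and no_atom: "\<forall>t>1. ereal (tail_quantile F t) < right_endpoint F" and "m > 0"
  shows "filterlim (\<lambda>y. 1 / (m * (1 - F y))) at_top (to_right_endpoint F)"
proof -
  have small: "eventually (\<lambda>y. 0 < 1 - F y \<and> 1 - F y < e) (to_right_endpoint F)" if "e > 0" for e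
    using eventually_tail_small_to_right_endpoint[OF df no_atom that] .
  have "((\<lambda>y. 1 - F y) \<longlongrightarrow> 0) (to_right_endpoint F)"
  proof (rule order_tendstoI)
    fix a :: real assume "a < 0"
    show "eventually (\<lambda>y. a < 1 - F y) (to_right_endpoint F)"
      using small[OF zero_less_one] by eventually_elim (use \<open>a < 0\<close> in auto)
  qed (auto elim: eventually_mono dest: small)
  then have "filterlim (\<lambda>y. m * (1 - F y)) (at_right 0) (to_right_endpoint F)"
    using small[of 1] \<open>m > 0\<close>
    by (intro tendsto_imp_filterlim_at_right) (auto intro: tendsto_mult_right_zero elim: eventually_mono)
  from filterlim_compose[OF filterlim_inverse_at_top_right this] show ?thesis
    by (simp add: inverse_eq_divide)
qed

text \<open>\<open>V t\<close> behaves like \<open>U (l t)\<close>.\<close>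
definition asymp_rescaled :: "(real \<Rightarrow> real) \<Rightarrow> (real \<Rightarrow> real) \<Rightarrow> real \<Rightarrow> bool" where
  "asymp_rescaled U V l \<longleftrightarrow>
     (\<forall>m. 0 < m \<and> m < l \<longrightarrow> eventually (\<lambda>t. U (t * m) \<le> V t) at_top) \<and>
     (\<forall>m>l. eventually (\<lambda>t. V t \<le> U (t * m)) at_top)"

text \<open>The assumption \<open>no_atom\<close> says that \<open>F\<close> has no atom at a finite right endpoint.\<close>
context
  fixes F G :: "real \<Rightarrow> real"
  assumes df_F: "distribution_function F" and df_G: "distribution_function G"
    and no_atom: "\<forall>t>1. ereal (tail_quantile F t) < right_endpoint F"
begin

lemma quantile_le_of_tail_ratio_gt:
  assumes "m > 0" and "eventually (\<lambda>y. m < (1 - G y) / (1 - F y)) (to_right_endpoint F)"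
  shows "eventually (\<lambda>t. tail_quantile F (t * m) \<le> tail_quantile G t) at_top"
proof -
  obtain y0 where y0: "ereal y0 < right_endpoint F"
    and ratio: "\<And>y. y0 < y \<Longrightarrow> ereal y < right_endpoint F \<Longrightarrow> m < (1 - G y) / (1 - F y)"
    using assms(2) unfolding eventually_to_right_endpoint[OF df_F] by auto
  have "eventually (\<lambda>r. 1 < r \<and> y0 < tail_quantile F r) at_top"
    using eventually_gt_at_top[of 1]
      eventually_gt_tail_quantile[OF df_F less_1_of_less_right_endpoint[OF df_F y0]]
    by eventually_elim simp
  from eventually_compose_filterlim[OF this filterlim_mult_const_at_top[OF \<open>m > 0\<close>]]
  show ?thesis using eventually_gt_at_top[of 1]
  proof eventually_elim
    case (elim t)
    show ?case
    proof (rule dense_le_bounded[of y0])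
      show "y0 < tail_quantile F (t * m)" using elim by simp
      fix w assume w: "y0 < w" "w < tail_quantile F (t * m)"
      have "ereal w < right_endpoint F"
        using no_atom elim w(2) by (meson ereal_less_eq(3) less_imp_le order_le_less_trans)
      then have "F w < 1" "m < (1 - G w) / (1 - F w)"
        using ratio w(1) less_1_of_less_right_endpoint[OF df_F] by auto
      then have ratio_w: "m * (1 - F w) < 1 - G w" by (simp add: field_simps)
      have "1 / (t * m) < 1 - F w"
        using tail_quantile_le_iff[OF df_F, of "t * m" w] elim w(2) by auto
      then have "1 / t < m * (1 - F w)" using \<open>m > 0\<close> elim by (simp add: field_simps)
      then have "\<not> tail_quantile G t \<le> w"
        using ratio_w tail_quantile_le_iff[OF df_G, of t w] elim by auto
      then show "w \<le> tail_quantile G t" by simp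
    qed
  qed
qed

lemma quantile_ge_of_tail_ratio_lt:
  assumes "m > 0" and "eventually (\<lambda>y. (1 - G y) / (1 - F y) < m) (to_right_endpoint F)"
  shows "eventually (\<lambda>t. tail_quantile G t \<le> tail_quantile F (t * m)) at_top"
proof -
  obtain y0 where y0: "ereal y0 < right_endpoint F"
    and ratio: "\<And>y. y0 < y \<Longrightarrow> ereal y < right_endpoint F \<Longrightarrow> (1 - G y) / (1 - F y) < m"
    using assms(2) unfolding eventually_to_right_endpoint[OF df_F] by auto
  have "eventually (\<lambda>r. 1 < r \<and> y0 < tail_quantile F r) at_top"
    using eventually_gt_at_top[of 1]
      eventually_gt_tail_quantile[OF df_F less_1_of_less_right_endpoint[OF df_F y0]]
    by eventually_elim simp
  from eventually_compose_filterlim[OF this filterlim_mult_const_at_top[OF \<open>m > 0\<close>]]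
  show ?thesis using eventually_gt_at_top[of 1]
  proof eventually_elim
    case (elim t)
    define w where "w = tail_quantile F (t * m)"
    have "ereal w < right_endpoint F" using no_atom elim by (simp add: w_def)
    then have "F w < 1" "(1 - G w) / (1 - F w) < m"
      using ratio elim less_1_of_less_right_endpoint[OF df_F] by (auto simp: w_def)
    then have ratio_w: "1 - G w < m * (1 - F w)" by (simp add: field_simps)
    have "1 - F w \<le> 1 / (t * m)"
      using tail_quantile_le_iff[OF df_F, of "t * m" w] elim by (simp add: w_def)
    then have "m * (1 - F w) \<le> 1 / t" using \<open>m > 0\<close> elim by (simp add: field_simps)
    then have "1 - 1/t \<le> G w" using ratio_w by simp
    then show ?case using tail_quantile_le_iff[OF df_G, of t w] elim by (simp add: w_def)
  qed
qed

lemma tail_ratio_gt_of_quantile_le: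
  assumes "0 < m'" "m' < m"
    and "eventually (\<lambda>t. tail_quantile F (t * m) \<le> tail_quantile G t) at_top"
  shows "eventually (\<lambda>y. m' < (1 - G y) / (1 - F y)) (to_right_endpoint F)"
proof -
  have "eventually (\<lambda>t. 1 < t \<and> tail_quantile F (t * m) \<le> tail_quantile G t) at_top"
    using assms(3) eventually_gt_at_top[of 1] by eventually_elim simp
  from eventually_compose_filterlim[OF this
      filterlim_inverse_tail_to_right_endpoint[OF df_F no_atom \<open>0 < m'\<close>]]
  show ?thesis
    using eventually_tail_small_to_right_endpoint[OF df_F no_atom zero_less_one]
  proof eventually_elim
    case (elim y)
    define d where "d = 1 - F y"
    define t where "t = 1 / (m' * d)"
    have d: "0 < d" "d < 1" using elim by (auto simp: d_def)
    have t: "1 < t" "tail_quantile F (t * m) \<le> tail_quantile G t"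
      using elim by (auto simp: t_def d_def)
    have "d * m' < 1 * m'" using assms(1) d by (intro mult_strict_right_mono) auto
    then have "d * m' < m" using assms(2) by simp
    then have "1 < t * m" using assms(1) d by (simp add: t_def field_simps)
    moreover have "1 / (t * m) < d" using assms(1,2) d by (simp add: t_def field_simps)
    ultimately have "y < tail_quantile F (t * m)"
      using tail_quantile_le_iff[OF df_F, of "t * m" y] by (auto simp: d_def)
    then have "\<not> 1 - 1/t \<le> G y" using t tail_quantile_le_iff[OF df_G, of t y] by auto
    then have "m' * d < 1 - G y" using assms(1) d by (simp add: t_def)
    then show ?case using d by (simp add: d_def field_simps)
  qed
qed

lemma tail_ratio_le_of_quantile_ge:
  assumes "0 < m"
    and "eventually (\<lambda>t. tail_quantile G t \<le> tail_quantile F (t * m)) at_top"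
  shows "eventually (\<lambda>y. (1 - G y) / (1 - F y) \<le> m) (to_right_endpoint F)"
proof -
  have "eventually (\<lambda>t. 1 < t \<and> tail_quantile G t \<le> tail_quantile F (t * m)) at_top"
    using assms(2) eventually_gt_at_top[of 1] by eventually_elim simp
  from eventually_compose_filterlim[OF this
      filterlim_inverse_tail_to_right_endpoint[OF df_F no_atom \<open>0 < m\<close>]]
  show ?thesis
    using eventually_tail_small_to_right_endpoint[OF df_F no_atom zero_less_one]
  proof eventually_elim
    case (elim y)
    define d where "d = 1 - F y"
    define t where "t = 1 / (m * d)"
    have d: "0 < d" "d < 1" using elim by (auto simp: d_def)
    have t: "1 < t" "tail_quantile G t \<le> tail_quantile F (t * m)"
      using elim by (auto simp: t_def d_def)
    have tm: "t * m = 1 / d" using assms(1) d by (simp add: t_def)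
    then have "tail_quantile F (t * m) \<le> y"
      using tail_quantile_le_iff[OF df_F, of "t * m" y] d by (simp add: d_def)
    then have "1 - 1/t \<le> G y" using t tail_quantile_le_iff[OF df_G, of t y] by simp
    then have "1 - G y \<le> m * d" using assms(1) d by (simp add: t_def)
    then show ?case using d by (simp add: d_def field_simps)
  qed
qed

lemma tail_ratio_tendsto_iff_asymp_rescaled:
  assumes "l > 0"
  shows "((\<lambda>y. (1 - G y) / (1 - F y)) \<longlongrightarrow> l) (to_right_endpoint F)
     \<longleftrightarrow> asymp_rescaled (tail_quantile F) (tail_quantile G) l"
  unfolding asymp_rescaled_def
proof (intro iffI conjI allI impI)
  assume lim: "((\<lambda>y. (1 - G y) / (1 - F y)) \<longlongrightarrow> l) (to_right_endpoint F)"
  fix m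
  show "eventually (\<lambda>t. tail_quantile F (t * m) \<le> tail_quantile G t) at_top" if "0 < m \<and> m < l"
    using that order_tendstoD(1)[OF lim]
    by (intro quantile_le_of_tail_ratio_gt) auto
  show "eventually (\<lambda>t. tail_quantile G t \<le> tail_quantile F (t * m)) at_top" if "l < m"
    using that \<open>l > 0\<close> order_tendstoD(2)[OF lim]
    by (intro quantile_ge_of_tail_ratio_lt) auto
next
  assume bounds: "(\<forall>m. 0 < m \<and> m < l \<longrightarrow>
        eventually (\<lambda>t. tail_quantile F (t * m) \<le> tail_quantile G t) at_top) \<and>
      (\<forall>m>l. eventually (\<lambda>t. tail_quantile G t \<le> tail_quantile F (t * m)) at_top)"
  show "((\<lambda>y. (1 - G y) / (1 - F y)) \<longlongrightarrow> l) (to_right_endpoint F)"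
  proof (rule order_tendstoI)
    fix k assume "k < l"
    define m' where "m' = (max k 0 + l) / 2"
    define m where "m = (m' + l) / 2"
    have m: "0 < m'" "m' < m" "m < l" "k < m'"
      using \<open>k < l\<close> \<open>l > 0\<close> by (auto simp: m'_def m_def)
    have "eventually (\<lambda>y. m' < (1 - G y) / (1 - F y)) (to_right_endpoint F)"
      using bounds m by (intro tail_ratio_gt_of_quantile_le) auto
    then show "eventually (\<lambda>y. k < (1 - G y) / (1 - F y)) (to_right_endpoint F)"
      by eventually_elim (use m in auto)
  next
    fix k assume "l < k"
    define m where "m = (l + k) / 2"
    have m: "0 < m" "l < m" "m < k" using \<open>l < k\<close> \<open>l > 0\<close> by (auto simp: m_def)
    have "eventually (\<lambda>y. (1 - G y) / (1 - F y) \<le> m) (to_right_endpoint F)"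
      using bounds m by (intro tail_ratio_le_of_quantile_ge) auto
    then show "eventually (\<lambda>y. (1 - G y) / (1 - F y) < k) (to_right_endpoint F)"
      by eventually_elim (use m in auto)
  qed
qed

end

lemma normalized_diff_tendsto_iff_asymp_rescaled:
  fixes U V a h :: "real \<Rightarrow> real"
  assumes a_pos: "eventually (\<lambda>t. a t > 0) at_top"
    and conv: "\<And>x. x > 0 \<Longrightarrow> ((\<lambda>t. (U (t * x) - U t) / a t) \<longlongrightarrow> h x) at_top"
    and h_mono: "strict_mono_on {0<..} h" and h_cont: "isCont h l" and "l > 0"
  shows "((\<lambda>t. (V t - U t) / a t) \<longlongrightarrow> h l) at_top \<longleftrightarrow> asymp_rescaled U V l"
  unfolding asymp_rescaled_def
proof (intro iffI conjI allI impI)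
  assume lim: "((\<lambda>t. (V t - U t) / a t) \<longlongrightarrow> h l) at_top"
  fix m
  show "eventually (\<lambda>t. U (t * m) \<le> V t) at_top" if m: "0 < m \<and> m < l"
  proof -
    define mid where "mid = (h m + h l) / 2"
    have "h m < h l" using m h_mono by (auto intro: strict_mono_onD)
    then have "h m < mid" "mid < h l" by (auto simp: mid_def)
    with order_tendstoD(2)[OF conv] order_tendstoD(1)[OF lim] m
    have "eventually (\<lambda>t. (U (t * m) - U t) / a t < mid) at_top"
      "eventually (\<lambda>t. mid < (V t - U t) / a t) at_top" by auto
    then show ?thesis using a_pos
      by eventually_elim (smt (verit) divide_strict_right_mono)
  qed
  show "eventually (\<lambda>t. V t \<le> U (t * m)) at_top" if m: "l < m"
  proof -
    define mid where "mid = (h m + h l) / 2"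
    have "h l < h m" using m \<open>l > 0\<close> h_mono by (auto intro: strict_mono_onD)
    then have "mid < h m" "h l < mid" by (auto simp: mid_def)
    with order_tendstoD(1)[OF conv] order_tendstoD(2)[OF lim] m \<open>l > 0\<close>
    have "eventually (\<lambda>t. mid < (U (t * m) - U t) / a t) at_top"
      "eventually (\<lambda>t. (V t - U t) / a t < mid) at_top" by auto
    then show ?thesis using a_pos
      by eventually_elim (smt (verit) divide_strict_right_mono)
  qed
next
  assume bounds: "(\<forall>m. 0 < m \<and> m < l \<longrightarrow> eventually (\<lambda>t. U (t * m) \<le> V t) at_top) \<and>
    (\<forall>m>l. eventually (\<lambda>t. V t \<le> U (t * m)) at_top)"
  have h_left: "(h \<longlongrightarrow> h l) (at_left l)" and h_right: "(h \<longlongrightarrow> h l) (at_right l)"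
    using h_cont unfolding isCont_def by (auto intro: tendsto_within_subset)
  show "((\<lambda>t. (V t - U t) / a t) \<longlongrightarrow> h l) at_top"
  proof (rule order_tendstoI)
    fix e assume "e < h l"
    obtain b where b: "b < l" "\<And>y. b < y \<Longrightarrow> y < l \<Longrightarrow> e < h y"
      using order_tendstoD(1)[OF h_left \<open>e < h l\<close>]
      unfolding eventually_at_left_field by auto
    define m where "m = (max b 0 + l) / 2"
    have m: "0 < m" "m < l" "e < h m" using b \<open>l > 0\<close> by (auto simp: m_def)
    have "eventually (\<lambda>t. e < (U (t * m) - U t) / a t) at_top"
      using order_tendstoD(1)[OF conv m(3)] m(1) .
    moreover have "eventually (\<lambda>t. U (t * m) \<le> V t) at_top" using bounds m by auto
    ultimately show "eventually (\<lambda>t. e < (V t - U t) / a t) at_top"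
      using a_pos
      by eventually_elim (smt (verit) divide_right_mono)
  next
    fix e assume "h l < e"
    obtain b where b: "l < b" "\<And>y. l < y \<Longrightarrow> y < b \<Longrightarrow> h y < e"
      using order_tendstoD(2)[OF h_right \<open>h l < e\<close>]
      unfolding eventually_at_right_field by auto
    define m where "m = (l + b) / 2"
    have m: "0 < m" "l < m" "h m < e" using b \<open>l > 0\<close> by (auto simp: m_def)
    have "eventually (\<lambda>t. (U (t * m) - U t) / a t < e) at_top"
      using order_tendstoD(2)[OF conv m(3)] m(1) .
    moreover have "eventually (\<lambda>t. V t \<le> U (t * m)) at_top" using bounds m by auto
    ultimately show "eventually (\<lambda>t. (V t - U t) / a t < e) at_top"
      using a_pos
      by eventually_elim (smt (verit) divide_right_mono)
  qed
qed

lemma strict_mono_on_gpd_h: "strict_mono_on {0<..} (gpd_h \<gamma>)"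
proof (rule strict_mono_onI)
  fix x y :: real assume "x \<in> {0<..}" "x < y"
  then have "0 < x" "x < y" by auto
  consider "\<gamma> = 0" | "\<gamma> > 0" | "\<gamma> < 0" by linarith
  then show "gpd_h \<gamma> x < gpd_h \<gamma> y"
  proof cases
    case 1 then show ?thesis using \<open>0 < x\<close> \<open>x < y\<close> by (simp add: gpd_h_def)
  next
    case 2
    then have "x powr \<gamma> < y powr \<gamma>" using \<open>0 < x\<close> \<open>x < y\<close> by (intro powr_less_mono2) auto
    then show ?thesis using 2 by (simp add: gpd_h_def divide_strict_right_mono)
  next
    case 3
    then have "y powr \<gamma> < x powr \<gamma>" using \<open>0 < x\<close> \<open>x < y\<close> by (intro powr_less_mono2_neg) auto
    then show ?thesis using 3 by (simp add: gpd_h_def divide_strict_right_mono_neg)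
  qed
qed

lemma isCont_gpd_h: "x > 0 \<Longrightarrow> isCont (gpd_h \<gamma>) x"
  by (cases "\<gamma> = 0") (auto simp: gpd_h_def [abs_def] intro!: continuous_intros)

lemma gpd_h_exp: "gpd_h \<gamma> (exp (c * s)) = shift_const \<gamma> c s"
  by (simp add: gpd_h_def shift_const_def powr_def mult_ac)

theorem mainTheorem4:
  fixes F0 Fs a0 :: "real \<Rightarrow> real" and c s \<gamma> :: real
  assumes "distribution_function F0" and "distribution_function Fs"
    and "s \<ge> 0"
    and "\<forall>t>1. a0 t > 0"
    and "\<forall>x>0. ((\<lambda>t. (tail_quantile F0 (t * x) - tail_quantile F0 t) / a0 t)
                 \<longlongrightarrow> gpd_h \<gamma> x) at_top"
  shows "((\<lambda>x. (1 - Fs x) / (1 - F0 x)) \<longlongrightarrow> exp (c * s)) (to_right_endpoint F0)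
     \<longleftrightarrow> ((\<lambda>t. (tail_quantile Fs t - tail_quantile F0 t) / a0 t)
            \<longlongrightarrow> shift_const \<gamma> c s) at_top"
proof -
  have a_pos: "eventually (\<lambda>t. a0 t > 0) at_top"
    using eventually_gt_at_top[of 1] by eventually_elim (use assms(4) in auto)
  have conv: "\<And>x. x > 0 \<Longrightarrow>
      ((\<lambda>t. (tail_quantile F0 (t * x) - tail_quantile F0 t) / a0 t) \<longlongrightarrow> gpd_h \<gamma> x) at_top"
    using assms(5) by simp
  have "0 < gpd_h \<gamma> 2"
    using strict_mono_onD[OF strict_mono_on_gpd_h, of 1 2 \<gamma>] by (simp add: gpd_h_def split: if_splits)
  from order_tendstoD(1)[OF conv[OF zero_less_numeral] this] a_pos
  have "eventually (\<lambda>t. tail_quantile F0 t < tail_quantile F0 (t * 2)) at_top"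
    by eventually_elim (simp add: zero_less_divide_iff)
  then have no_atom: "\<forall>t>1. ereal (tail_quantile F0 t) < right_endpoint F0"
    by (rule tail_quantile_less_right_endpointI[OF assms(1)]) simp
  have "((\<lambda>x. (1 - Fs x) / (1 - F0 x)) \<longlongrightarrow> exp (c * s)) (to_right_endpoint F0)
      \<longleftrightarrow> asymp_rescaled (tail_quantile F0) (tail_quantile Fs) (exp (c * s))"
    by (rule tail_ratio_tendsto_iff_asymp_rescaled[OF assms(1,2) no_atom exp_gt_zero])
  also have "\<dots> \<longleftrightarrow> ((\<lambda>t. (tail_quantile Fs t - tail_quantile F0 t) / a0 t)
      \<longlongrightarrow> gpd_h \<gamma> (exp (c * s))) at_top"
    by (rule normalized_diff_tendsto_iff_asymp_rescaled[symmetric, OF a_pos conv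
          strict_mono_on_gpd_h isCont_gpd_h[OF exp_gt_zero] exp_gt_zero])
  finally show ?thesis by (simp only: gpd_h_exp)
qed

end
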